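(* In the triangle $T_2$, every individual entry appears at the head (column $0$) of infinitely many rows: for every positive integer $x$ and every $c\in\{0,\dots,x-1\}$, the entry located in row $x$, column $c$ of $T_2$ occupies column $0$ of row $y$ for infinitely many $y$.
   Context: For a positive integer $m$, the triangle $T_m$ is an array whose row $x$ ($x=1,2,\dots$) has $x$ entries, in columns $0,\dots,x-1$. Row $1$ is the single entry $1$. For $x>1$, row $x$ is obtained from row $x-1$ by rotating it cyclically left by $m$ positions (the entry in column $c$ of row $x-1$ moves to column $(c-m)\bmod(x-1)\in\{0,\dots,x-2\}$ of row $x$), then appending in column $x-1$ a new entry equal to $1$ plus the entry in column $0$ of row $x-1$. Entries are regarded as individual objects keeping their identity as they move from row to row. Here $m=2$. *)

theory Defs
  imports Main
begin

text \<open>Row x of the triangle T_m, as the list (column 0 first) of the identities of its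
entries.  An entry is identified by the row in which it was created (it is appended
in the last column of that row); identities are distinct, so equality of identities
is equality of entries as objects.  The numeric values (1 + head of previous row) are
irrelevant for the statement, which only tracks entries as objects.
List.rotate m rotates left by m (cyclically, modulo the length), so the entry in
column c moves to column (c - m) mod (x-1).  Row 0 is an auxiliary empty row;
tri m 1 = [1].\<close>

fun tri :: "nat \<Rightarrow> nat \<Rightarrow> nat list" where
  "tri m 0 = []"
| "tri m (Suc n) = rotate m (tri m n) @ [Suc n]"

end

theory Submission
  imports Defs
begin

text \<open>Passing from row n to row n+1 of T_2 moves an entry two columns to the left, so an
entry in an even column reaches the head, and an entry in an odd column reaches column 1.
From column 1 of row r it jumps to the last-but-one column r-1 of row r+1; if r is odd this
column is even, and if r = 2s it is odd and the entry lands again in column 1, now of row 3s.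
Each such round lowers the 2-adic valuation of the row index, so every entry eventually
reaches the head.  The head of row n then moves to column n-2 of row n+1, and the argument
repeats, so the entry returns to the head infinitely often.\<close>

lemma length_tri [simp]: "length (tri m n) = n"
  by (induction n) auto

lemma nth_tri_Suc:
  assumes "i < n"
  shows "tri m (Suc n) ! i = tri m n ! ((i + m) mod n)"
  using assms by (simp add: nth_append nth_rotate add.commute)

declare tri.simps(2) [simp del]

lemma nth_tri_shift:
  assumes "m * k \<le> p" "p < n"
  shows "tri m (n + k) ! (p - m * k) = tri m n ! p"
  using assms(1)
proof (induction k)
  case 0
  then show ?case by simp
next
  case (Suc k)
  have "p - m * Suc k < n + k" and "p - m * Suc k + m = p - m * k"
    using Suc.prems assms(2) by auto
  moreover have "p - m * k < n + k"
    using assms(2) by simp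
  ultimately have "tri m (n + Suc k) ! (p - m * Suc k) = tri m (n + k) ! (p - m * k)"
    by (simp add: nth_tri_Suc)
  with Suc show ?case by simp
qed

lemma nth_tri_Suc_wrap:
  assumes "p < m" "m \<le> n"
  shows "tri m (Suc n) ! (n + p - m) = tri m n ! p"
proof -
  have "(n + p - m + m) mod n = p"
    using assms by simp
  then show ?thesis
    using assms by (simp add: nth_tri_Suc)
qed

definition reaches_head :: "nat \<Rightarrow> nat \<Rightarrow> nat \<Rightarrow> bool" where
  "reaches_head m n p \<longleftrightarrow> (\<exists>y\<ge>n. tri m y ! 0 = tri m n ! p)"

lemma reaches_head_trans:
  assumes "reaches_head m n' p'" "n \<le> n'" "tri m n' ! p' = tri m n ! p"
  shows "reaches_head m n p"
  using assms unfolding reaches_head_def by (metis order_trans)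

lemma reaches_head_even:
  assumes "p < n" "even p"
  shows "reaches_head 2 n p"
proof -
  have "tri 2 (n + p div 2) ! 0 = tri 2 n ! p"
    using nth_tri_shift[of 2 "p div 2" p n] assms by simp
  then show ?thesis
    unfolding reaches_head_def by (metis le_add1)
qed

lemma nth_tri_odd:
  assumes "p < n" "odd p"
  shows "tri 2 (n + p div 2) ! 1 = tri 2 n ! p"
proof -
  have "p - 2 * (p div 2) = 1"
    using assms(2) by presburger
  then show ?thesis
    using nth_tri_shift[of 2 "p div 2" p n] assms(1) by simp
qed

lemma reaches_head_column_one_if_not_dvd:
  assumes "\<not> 2 ^ k dvd r" "2 \<le> r"
  shows "reaches_head 2 r 1"
  using assms
proof (induction k arbitrary: r)
  case 0
  then show ?case by simp
next
  case (Suc k)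
  have jump: "tri 2 (Suc r) ! (r - 1) = tri 2 r ! 1"
    using nth_tri_Suc_wrap[of 1 2 r] Suc.prems(2) by simp
  show ?case
  proof (cases "odd r")
    case True
    then have "reaches_head 2 (Suc r) (r - 1)"
      by (intro reaches_head_even) auto
    then show ?thesis
      using jump reaches_head_trans by fastforce
  next
    case False
    then obtain s where r: "r = 2 * s"
      by (auto elim: evenE)
    with Suc.prems(2) have "s \<ge> 1"
      by simp
    have "\<not> 2 ^ k dvd s"
      using Suc.prems(1) r by auto
    moreover have "coprime ((2::nat) ^ k) 3"
      by simp
    ultimately have "\<not> 2 ^ k dvd 3 * s"
      by (simp add: coprime_dvd_mult_right_iff)
    then have "reaches_head 2 (3 * s) 1"
      using Suc.IH \<open>s \<ge> 1\<close> by simp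
    moreover have "tri 2 (3 * s) ! 1 = tri 2 r ! 1"
    proof -
      have "odd (r - 1)" and row: "Suc r + (r - 1) div 2 = 3 * s"
        using r \<open>s \<ge> 1\<close> by simp_all
      then have "tri 2 (3 * s) ! 1 = tri 2 (Suc r) ! (r - 1)"
        using nth_tri_odd[of "r - 1" "Suc r"] by simp
      with jump show ?thesis
        by simp
    qed
    ultimately show ?thesis
      using r reaches_head_trans[of 2 "3 * s" 1 r 1] by simp
  qed
qed

lemma reaches_head_column_one:
  assumes "2 \<le> r"
  shows "reaches_head 2 r 1"
proof -
  have "\<not> 2 ^ r dvd r"
  proof
    assume "2 ^ r dvd r"
    then have "2 ^ r \<le> r"
      using assms by (simp add: dvd_imp_le)
    then show False
      by (meson less_exp not_le)
  qed
  then show ?thesis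
    using reaches_head_column_one_if_not_dvd assms by blast
qed

lemma reaches_head_tri_2:
  assumes "p < n"
  shows "reaches_head 2 n p"
proof (cases "even p")
  case True
  then show ?thesis
    using reaches_head_even assms by blast
next
  case False
  then have "2 \<le> n + p div 2"
    using assms by presburger
  then show ?thesis
    using reaches_head_column_one nth_tri_odd[OF assms False] reaches_head_trans by fastforce
qed

lemma head_tri_2_recurs:
  assumes "1 \<le> n"
  shows "\<exists>y>n. tri 2 y ! 0 = tri 2 n ! 0"
proof (cases "n = 1")
  case True
  have "tri 2 2 ! 0 = tri 2 1 ! 0"
    by (simp add: numeral_2_eq_2 tri.simps)
  then show ?thesis
    using True by (intro exI[of _ 2]) simp
next
  case False
  then have "2 \<le> n"
    using assms by simp
  then have "tri 2 (Suc n) ! (n - 2) = tri 2 n ! 0"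
    using nth_tri_Suc_wrap[of 0 2 n] by simp
  moreover have "reaches_head 2 (Suc n) (n - 2)"
    using \<open>2 \<le> n\<close> by (intro reaches_head_tri_2) simp
  ultimately show ?thesis
    unfolding reaches_head_def by (metis Suc_le_lessD)
qed

theorem mainTheorem4:
  fixes x c :: nat
  assumes "1 \<le> x" and "c < x"
  shows "infinite {y. 1 \<le> y \<and> tri 2 y ! 0 = tri 2 x ! c}"
proof (rule infinite_growing)
  show "{y. 1 \<le> y \<and> tri 2 y ! 0 = tri 2 x ! c} \<noteq> {}"
    using reaches_head_tri_2[OF assms(2)] assms(1) unfolding reaches_head_def by fastforce
next
  fix y
  assume "y \<in> {y. 1 \<le> y \<and> tri 2 y ! 0 = tri 2 x ! c}"
  then show "\<exists>z\<in>{y. 1 \<le> y \<and> tri 2 y ! 0 = tri 2 x ! c}. y < z"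
    using head_tri_2_recurs by fastforce
qed

end
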